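(* Let $\beta=(\beta_1,\ldots,\beta_\ell)$ be a composition of $N$ and let $\mathcal{Q}_\beta$ be the corresponding parabolic subposet of $1<\cdots<N$. Then $\mathcal{P}\mapsto\mathrm{fat}_\beta(\mathcal{P})$ is a bijection from the set of subposets of the total order $1<2<\cdots<\ell$ onto the set of Levi compatible subposets of $\mathcal{Q}_\beta$.
   Context: Fix a prime power $q$ and the finite field $\mathbb{F}_q$; $\mathrm{GL}_N=\mathrm{GL}_N(\mathbb{F}_q)$. A subposet of a poset $(X,\prec_{\mathcal{R}})$ is a strict partial order $\prec_{\mathcal{P}}$ on the same set with $a\prec_{\mathcal{P}}b\Rightarrow a\prec_{\mathcal{R}}b$. For a subposet $\mathcal{R}$ of $1<\cdots<N$, $\mathfrak{ut}_{\mathcal{R}}=\{x\in M_N(\mathbb{F}_q)\mid x_{ab}\ne0\Rightarrow a\prec_{\mathcal{R}}b\}$ and $\mathrm{UT}_{\mathcal{R}}=\mathrm{Id}_N+\mathfrak{ut}_{\mathcal{R}}$. For a composition $\beta=(\beta_1,\ldots,\beta_\ell)$ of $N$ let $\mathcal{Q}_i=\{\beta_1+\cdots+\beta_{i-1}+1,\ldots,\beta_1+\cdots+\beta_i\}$, and let $\mathcal{Q}_\beta$ be the poset on $\{1,\ldots,N\}$ with $a\prec b$ iff $a\in\mathcal{Q}_i,b\in\mathcal{Q}_j$, $i<j$. Let $L_\beta\cong\mathrm{GL}_{\beta_1}\times\cdots\times\mathrm{GL}_{\beta_\ell}$ be the block-diagonal subgroup of $\mathrm{GL}_N$ with diagonal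 blocks indexed by $\mathcal{Q}_1,\ldots,\mathcal{Q}_\ell$. A subposet $\mathcal{R}$ of $\mathcal{Q}_\beta$ is Levi compatible if $L_\beta\subseteq N_{\mathrm{GL}_N}(\mathrm{UT}_{\mathcal{R}})$. For a subposet $\mathcal{P}$ of $1<\cdots<\ell$, $\mathrm{fat}_\beta(\mathcal{P})$ is the subposet of $\mathcal{Q}_\beta$ with $a\prec b$ iff $a\in\mathcal{Q}_i$, $b\in\mathcal{Q}_j$ with $i\prec_{\mathcal{P}}j$. *)

theory Defs
  imports "Jordan_Normal_Form.Matrix"
begin

definition strict_po :: "nat set \<Rightarrow> (nat \<times> nat) set \<Rightarrow> bool" where
  "strict_po X P \<longleftrightarrow> P \<subseteq> X \<times> X \<and> irrefl P \<and> trans P"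

definition subposet :: "nat set \<Rightarrow> (nat \<times> nat) set \<Rightarrow> (nat \<times> nat) set \<Rightarrow> bool" where
  "subposet X P R \<longleftrightarrow> strict_po X P \<and> P \<subseteq> R"

definition chain_order :: "nat \<Rightarrow> (nat \<times> nat) set" where
  "chain_order n = {(a, b). 1 \<le> a \<and> a < b \<and> b \<le> n}"

definition composition :: "nat list \<Rightarrow> nat \<Rightarrow> bool" where
  "composition \<beta> N \<longleftrightarrow> (\<forall>b \<in> set \<beta>. 0 < b) \<and> sum_list \<beta> = N"

definition blk :: "nat list \<Rightarrow> nat \<Rightarrow> nat set" where
  "blk \<beta> i = {sum_list (take (i - 1) \<beta>) + 1 .. sum_list (take i \<beta>)}"

definition Qpos :: "nat list \<Rightarrow> (nat \<times> nat) set" where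
  "Qpos \<beta> = {(a, b). \<exists>i j. 1 \<le> i \<and> i < j \<and> j \<le> length \<beta> \<and> a \<in> blk \<beta> i \<and> b \<in> blk \<beta> j}"

definition fat :: "nat list \<Rightarrow> (nat \<times> nat) set \<Rightarrow> (nat \<times> nat) set" where
  "fat \<beta> P = {(a, b). \<exists>i j. (i, j) \<in> P \<and> a \<in> blk \<beta> i \<and> b \<in> blk \<beta> j}"

(* Matrices are N x N matrices of Jordan_Normal_Form, indexed 0..N-1;
   the paper's row/column index a in {1..N} corresponds to index a - 1. *)

definition GL :: "nat \<Rightarrow> 'a::field mat set" where
  "GL N = {g \<in> carrier_mat N N. invertible_mat g}"

definition ut :: "nat \<Rightarrow> (nat \<times> nat) set \<Rightarrow> 'a::field mat set" where
  "ut N R = {x \<in> carrier_mat N N. \<forall>i<N. \<forall>j<N. x $$ (i, j) \<noteq> 0 \<longrightarrow> (i + 1, j + 1) \<in> R}"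

definition UT :: "nat \<Rightarrow> (nat \<times> nat) set \<Rightarrow> 'a::field mat set" where
  "UT N R = (\<lambda>x. 1\<^sub>m N + x) ` ut N R"

definition normalizer :: "nat \<Rightarrow> 'a::field mat set \<Rightarrow> 'a mat set" where
  "normalizer N H = {g \<in> GL N. \<forall>h \<in> carrier_mat N N. g * h = 1\<^sub>m N \<and> h * g = 1\<^sub>m N
        \<longrightarrow> {g * u * h | u. u \<in> H} = H}"

definition Levi :: "nat list \<Rightarrow> 'a::field mat set" where
  "Levi \<beta> = {g \<in> GL (sum_list \<beta>). \<forall>i<sum_list \<beta>. \<forall>j<sum_list \<beta>.
        g $$ (i, j) \<noteq> 0 \<longrightarrow> (\<exists>k. 1 \<le> k \<and> k \<le> length \<beta> \<and> i + 1 \<in> blk \<beta> k \<and> j + 1 \<in> blk \<beta> k)}"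

definition levi_compatible :: "'a::field itself \<Rightarrow> nat list \<Rightarrow> (nat \<times> nat) set \<Rightarrow> bool" where
  "levi_compatible TYPE('a) \<beta> R \<longleftrightarrow>
     subposet {1..sum_list \<beta>} R (Qpos \<beta>) \<and>
     (Levi \<beta> :: 'a mat set) \<subseteq> normalizer (sum_list \<beta>) (UT (sum_list \<beta>) R)"

end

theory Submission
  imports Defs "Jordan_Normal_Form.Column_Operations" "HOL-Combinatorics.Transposition"
begin

text \<open>A Levi compatible \<open>R\<close> is a union of whole block rectangles \<open>Q\<^sub>i \<times> Q\<^sub>j\<close>: the
  permutation matrix of a transposition inside one block lies in \<open>L\<^sub>\<beta>\<close>, and conjugating the
  elementary unipotent matrix with entry \<open>(a, b)\<close> by it moves that entry to the transposed
  position. Hence \<open>R = fat\<^sub>\<beta>(P)\<close> for the relation \<open>P\<close> that \<open>R\<close> induces on block indices,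
  and \<open>P\<close> inherits transitivity from \<open>R\<close>. Conversely, \<open>L\<^sub>\<beta>\<close> normalises \<open>UT(fat\<^sub>\<beta>(P))\<close>
  because block-diagonal matrices and their inverses are supported on the block-diagonal relation
  \<open>D\<close>, and \<open>D \<circ> fat\<^sub>\<beta>(P) \<circ> D = fat\<^sub>\<beta>(P)\<close>. Injectivity holds since all blocks are nonempty.\<close>

lemma sum_list_take_mono: "i \<le> j \<Longrightarrow> sum_list (take i xs) \<le> sum_list (take j (xs :: nat list))"
proof -
  assume "i \<le> j"
  then obtain d where "j = i + d" using le_Suc_ex by blast
  then show ?thesis by (simp add: take_add)
qed

lemma blk_index_bounds: "a \<in> blk \<beta> i \<Longrightarrow> 1 \<le> i \<and> i \<le> length \<beta>"
  by (cases "i = 0"; cases "i > length \<beta>") (auto simp: blk_def)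

lemma blk_disjoint:
  assumes "a \<in> blk \<beta> i" "a \<in> blk \<beta> j" shows "i = j"
proof (rule linorder_cases)
  assume "i < j"
  then have "sum_list (take i \<beta>) \<le> sum_list (take (j - 1) \<beta>)" by (intro sum_list_take_mono) auto
  then show ?thesis using assms by (auto simp: blk_def)
next
  assume "j < i"
  then have "sum_list (take j \<beta>) \<le> sum_list (take (i - 1) \<beta>)" by (intro sum_list_take_mono) auto
  then show ?thesis using assms by (auto simp: blk_def)
qed

lemma blk_subset: "blk \<beta> i \<subseteq> {1..sum_list \<beta>}"
proof -
  have "sum_list \<beta> = sum_list (take i \<beta>) + sum_list (drop i \<beta>)"
    by (metis append_take_drop_id sum_list_append)
  then show ?thesis by (auto simp: blk_def)
qed

lemma blk_nonempty:
  assumes "\<forall>b \<in> set \<beta>. 0 < b" "1 \<le> i" "i \<le> length \<beta>" shows "blk \<beta> i \<noteq> {}"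
proof -
  have "take i \<beta> = take (i - 1) \<beta> @ [\<beta> ! (i - 1)]"
    using assms(2,3) by (cases i) (auto simp: take_Suc_conv_app_nth)
  moreover have "\<beta> ! (i - 1) > 0" using assms by auto
  ultimately have "sum_list (take (i - 1) \<beta>) + 1 \<in> blk \<beta> i" by (auto simp: blk_def)
  then show ?thesis by blast
qed

lemma blk_cover:
  assumes "a \<in> {1..sum_list \<beta>}" shows "\<exists>k. a \<in> blk \<beta> k"
proof -
  let ?S = "\<lambda>k. sum_list (take k \<beta>)"
  have ex: "\<exists>k. a \<le> ?S k" using assms by (intro exI[of _ "length \<beta>"]) auto
  define k where "k = (LEAST k. a \<le> ?S k)"
  have k: "a \<le> ?S k" unfolding k_def by (rule LeastI_ex[OF ex])
  have "k \<noteq> 0" using k assms by (cases "k = 0") auto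
  then have "\<not> a \<le> ?S (k - 1)"
    by (intro not_less_Least[of "k - 1" "\<lambda>k. a \<le> ?S k", folded k_def]) simp
  then have "a \<in> blk \<beta> k" using k by (auto simp: blk_def)
  then show ?thesis by blast
qed

lemma fat_subsetD:
  assumes "\<forall>b \<in> set \<beta>. 0 < b" "P \<subseteq> {1..length \<beta>} \<times> {1..length \<beta>}" "fat \<beta> P \<subseteq> fat \<beta> Q"
  shows "P \<subseteq> Q"
proof (intro subrelI)
  fix i j assume ij: "(i, j) \<in> P"
  then have "blk \<beta> i \<noteq> {}" "blk \<beta> j \<noteq> {}" using assms(2) blk_nonempty[OF assms(1)] by auto
  then obtain a b where ab: "a \<in> blk \<beta> i" "b \<in> blk \<beta> j" by blast
  then have "(a, b) \<in> fat \<beta> P" using ij by (auto simp: fat_def)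
  then have "(a, b) \<in> fat \<beta> Q" using assms(3) by blast
  then obtain i' j' where "(i', j') \<in> Q" "a \<in> blk \<beta> i'" "b \<in> blk \<beta> j'" by (auto simp: fat_def)
  with ab show "(i, j) \<in> Q" using blk_disjoint by metis
qed

definition block_diag :: "nat list \<Rightarrow> (nat \<times> nat) set" where
  "block_diag \<beta> = {(a, b). \<exists>k. a \<in> blk \<beta> k \<and> b \<in> blk \<beta> k}"

lemma block_diag_trans: "block_diag \<beta> O block_diag \<beta> \<subseteq> block_diag \<beta>"
proof (intro subrelI)
  fix a c assume "(a, c) \<in> block_diag \<beta> O block_diag \<beta>"
  then obtain b k k' where "a \<in> blk \<beta> k" "b \<in> blk \<beta> k" "b \<in> blk \<beta> k'" "c \<in> blk \<beta> k'"
    by (auto simp: block_diag_def)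
  then show "(a, c) \<in> block_diag \<beta>" using blk_disjoint[of b \<beta> k k'] by (auto simp: block_diag_def)
qed

lemma Id_on_subset_block_diag: "Id_on {1..sum_list \<beta>} \<subseteq> block_diag \<beta>"
proof (intro subrelI)
  fix a c assume "(a, c) \<in> Id_on {1..sum_list \<beta>}"
  then show "(a, c) \<in> block_diag \<beta>" using blk_cover[of a \<beta>] by (auto simp: block_diag_def)
qed

lemma block_diag_O_fat: "block_diag \<beta> O fat \<beta> P \<subseteq> fat \<beta> P"
proof (intro subrelI)
  fix a c assume "(a, c) \<in> block_diag \<beta> O fat \<beta> P"
  then obtain b k i j where "a \<in> blk \<beta> k" "b \<in> blk \<beta> k" "(i, j) \<in> P" "b \<in> blk \<beta> i" "c \<in> blk \<beta> j"
    by (auto simp: block_diag_def fat_def)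
  then show "(a, c) \<in> fat \<beta> P" using blk_disjoint[of b \<beta> k i] by (auto simp: fat_def)
qed

lemma fat_O_block_diag: "fat \<beta> P O block_diag \<beta> \<subseteq> fat \<beta> P"
proof (intro subrelI)
  fix a c assume "(a, c) \<in> fat \<beta> P O block_diag \<beta>"
  then obtain b k i j where "(i, j) \<in> P" "a \<in> blk \<beta> i" "b \<in> blk \<beta> j" "b \<in> blk \<beta> k" "c \<in> blk \<beta> k"
    by (auto simp: block_diag_def fat_def)
  then show "(a, c) \<in> fat \<beta> P" using blk_disjoint[of b \<beta> j k] by (auto simp: fat_def)
qed

lemma ut_subset_carrier: "ut N R \<subseteq> carrier_mat N N"
  by (auto simp: ut_def)

lemma UT_subset_carrier: "UT N R \<subseteq> carrier_mat N N"
  using ut_subset_carrier by (fastforce simp: UT_def)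

lemma ut_mono: "S \<subseteq> T \<Longrightarrow> ut N S \<subseteq> ut N T"
  by (auto simp: ut_def)

lemma one_mat_in_ut: "Id_on {1..N} \<subseteq> S \<Longrightarrow> 1\<^sub>m N \<in> ut N S"
  by (auto simp: ut_def)

lemma ut_mult:
  assumes x: "x \<in> ut N S" and y: "y \<in> ut N T"
  shows "x * y \<in> ut N (S O T)"
proof -
  have c: "x \<in> carrier_mat N N" "y \<in> carrier_mat N N" using x y by (auto simp: ut_def)
  have "(i + 1, j + 1) \<in> S O T" if ij: "i < N" "j < N" "(x * y) $$ (i, j) \<noteq> 0" for i j
  proof -
    have "(\<Sum>k \<in> {0..<N}. x $$ (i, k) * y $$ (k, j)) \<noteq> 0"
      using c ij by (simp add: scalar_prod_def)
    then obtain k where "k < N" "x $$ (i, k) \<noteq> 0" "y $$ (k, j) \<noteq> 0"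
      by (auto elim: sum.not_neutral_contains_not_neutral)
    then have "(i + 1, k + 1) \<in> S" "(k + 1, j + 1) \<in> T" using x y ij by (auto simp: ut_def)
    then show ?thesis by (rule relcompI)
  qed
  then show ?thesis unfolding ut_def using mult_carrier_mat[OF c] by blast
qed

lemma finite_carrier_mat: "finite (carrier_mat n m :: 'a::finite mat set)"
proof -
  let ?I = "{0..<n} \<times> {0..<m}"
  have "carrier_mat n m \<subseteq> mat n m ` (?I \<rightarrow>\<^sub>E (UNIV :: 'a set))"
  proof
    fix A :: "'a mat" assume A: "A \<in> carrier_mat n m"
    have "A = mat n m (restrict (($$) A) ?I)"
    proof (rule eq_matI)
      fix i j assume "i < dim_row (mat n m (restrict (($$) A) ?I))" "j < dim_col (mat n m (restrict (($$) A) ?I))"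
      then show "A $$ (i, j) = mat n m (restrict (($$) A) ?I) $$ (i, j)" by simp
    qed (use A in simp_all)
    moreover have "restrict (($$) A) ?I \<in> ?I \<rightarrow>\<^sub>E UNIV" by simp
    ultimately show "A \<in> mat n m ` (?I \<rightarrow>\<^sub>E UNIV)" by (rule image_eqI)
  qed
  moreover have "finite (mat n m ` (?I \<rightarrow>\<^sub>E (UNIV :: 'a set)))"
    by (intro finite_imageI finite_PiE) simp_all
  ultimately show ?thesis by (rule finite_subset)
qed

text \<open>Over a finite field \<open>ut N D\<close> is a finite monoid on which left multiplication by \<open>g\<close>
  is injective, hence onto; so \<open>g\<close> has a right inverse there, which must be \<open>h\<close>.\<close>

lemma left_inverse_in_ut:
  fixes g h :: "'a::{finite,field} mat"
  assumes D_refl: "Id_on {1..N} \<subseteq> D" and D_trans: "D O D \<subseteq> D"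
    and g: "g \<in> ut N D" and h: "h \<in> carrier_mat N N" and hg: "h * g = 1\<^sub>m N"
  shows "h \<in> ut N D"
proof -
  let ?B = "ut N D :: 'a mat set"
  have gc: "g \<in> carrier_mat N N" using g ut_subset_carrier by blast
  have maps: "(*) g ` ?B \<subseteq> ?B" using ut_mult[OF g] ut_mono[OF D_trans] by blast
  have "inj_on ((*) g) ?B"
  proof (rule inj_onI)
    fix k1 k2 assume k: "k1 \<in> ?B" "k2 \<in> ?B" and e: "g * k1 = g * k2"
    have c: "k1 \<in> carrier_mat N N" "k2 \<in> carrier_mat N N" using k ut_subset_carrier by blast+
    have "k1 = (h * g) * k1" using c hg by simp
    also have "\<dots> = h * (g * k2)" using c gc h e by (simp add: assoc_mult_mat[OF h gc])
    also have "\<dots> = (h * g) * k2" using c gc h by (simp add: assoc_mult_mat[OF h gc])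
    also have "\<dots> = k2" using c hg by simp
    finally show "k1 = k2" .
  qed
  with maps have "(*) g ` ?B = ?B"
    by (intro endo_inj_surj finite_subset[OF ut_subset_carrier finite_carrier_mat])
  then have "1\<^sub>m N \<in> (*) g ` ?B" using one_mat_in_ut[OF D_refl] by simp
  then obtain k where k: "k \<in> ?B" "1\<^sub>m N = g * k" by blast
  have kc: "k \<in> carrier_mat N N" using k ut_subset_carrier by blast
  have "h = h * (g * k)" using h by (simp add: k(2)[symmetric])
  also have "\<dots> = (h * g) * k" using assoc_mult_mat[OF h gc kc] by simp
  also have "\<dots> = k" using hg kc by simp
  finally show ?thesis using k by simp
qed

lemma conj_mem_UT:
  assumes g: "g \<in> ut N D" and h: "h \<in> ut N D" and gh: "g * h = 1\<^sub>m N"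
    and DF: "D O F \<subseteq> F" and FD: "F O D \<subseteq> F" and u: "u \<in> UT N F"
  shows "g * u * h \<in> UT N F"
proof -
  obtain x where x: "x \<in> ut N F" "u = 1\<^sub>m N + x" using u by (auto simp: UT_def)
  have c: "g \<in> carrier_mat N N" "h \<in> carrier_mat N N" "x \<in> carrier_mat N N"
    using g h x ut_subset_carrier by blast+
  have "g * u * h = (g + g * x) * h"
    using c by (simp add: x(2) mult_add_distrib_mat[OF c(1) one_carrier_mat c(3)])
  also have "\<dots> = g * h + g * x * h"
    using c by (intro add_mult_distrib_mat) auto
  finally have "g * u * h = g * h + g * x * h" .
  moreover have "g * x * h \<in> ut N F"
    using ut_mult[OF ut_mult[OF g x(1)] h] ut_mono[of "(D O F) O D" F N] DF FD by blast
  ultimately show ?thesis using gh by (auto simp: UT_def)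
qed

lemma conj_UT_eq:
  assumes g: "g \<in> ut N D" and h: "h \<in> ut N D"
    and gh: "g * h = 1\<^sub>m N" and hg: "h * g = 1\<^sub>m N"
    and DF: "D O F \<subseteq> F" and FD: "F O D \<subseteq> F"
  shows "{g * u * h | u. u \<in> UT N F} = UT N F"
proof (intro equalityI subsetI)
  fix v :: "'a mat" assume "v \<in> UT N F"
  have c: "g \<in> carrier_mat N N" "h \<in> carrier_mat N N" "v \<in> carrier_mat N N"
    using g h \<open>v \<in> UT N F\<close> ut_subset_carrier UT_subset_carrier by blast+
  have "g * (h * v * g) * h = (g * h) * v * (g * h)"
    using c by (simp add: assoc_mult_mat[of _ N N _ N _ N])
  also have "\<dots> = v" using c gh by simp
  finally have eq: "g * (h * v * g) * h = v" .
  show "v \<in> {g * u * h | u. u \<in> UT N F}"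
  proof (intro CollectI exI conjI)
    show "v = g * (h * v * g) * h" using eq by simp
    show "h * v * g \<in> UT N F" by (rule conj_mem_UT[OF h g hg DF FD \<open>v \<in> UT N F\<close>])
  qed
qed (use conj_mem_UT[OF g h gh DF FD] in blast)

lemma mem_UT_iff:
  assumes "irrefl R"
  shows "u \<in> UT N R \<longleftrightarrow> u \<in> carrier_mat N N \<and> (\<forall>i<N. u $$ (i, i) = 1)
           \<and> (\<forall>i<N. \<forall>j<N. i \<noteq> j \<longrightarrow> u $$ (i, j) \<noteq> 0 \<longrightarrow> (i + 1, j + 1) \<in> R)"
proof
  assume "u \<in> UT N R"
  then obtain x where x: "x \<in> ut N R" "u = 1\<^sub>m N + x" by (auto simp: UT_def)
  have "x $$ (i, i) = 0" if "i < N" for i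
    using x(1) that assms by (auto simp: ut_def irrefl_def)
  then show "u \<in> carrier_mat N N \<and> (\<forall>i<N. u $$ (i, i) = 1)
           \<and> (\<forall>i<N. \<forall>j<N. i \<noteq> j \<longrightarrow> u $$ (i, j) \<noteq> 0 \<longrightarrow> (i + 1, j + 1) \<in> R)"
    using x by (auto simp: ut_def)
next
  assume u: "u \<in> carrier_mat N N \<and> (\<forall>i<N. u $$ (i, i) = 1)
           \<and> (\<forall>i<N. \<forall>j<N. i \<noteq> j \<longrightarrow> u $$ (i, j) \<noteq> 0 \<longrightarrow> (i + 1, j + 1) \<in> R)"
  then have "u - 1\<^sub>m N \<in> ut N R" by (auto simp: ut_def)
  moreover have "u = 1\<^sub>m N + (u - 1\<^sub>m N)" using u by (intro eq_matI) auto
  ultimately show "u \<in> UT N R" by (auto simp: UT_def)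
qed

lemma swaprows_mat_conj:
  assumes "A \<in> carrier_mat n n" "k < n" "l < n"
  shows "swaprows_mat n k l * A * swaprows_mat n k l = swap_cols_rows k l A"
proof -
  have "swap_cols_rows k l A = swaprows_mat n k l * (A * swaprows_mat n k l)"
    unfolding swap_cols_rows_def swapcols_mat[OF assms]
    by (rule swaprows_mat[of _ n n]) (use assms in auto)
  then show ?thesis using assms(1) by (simp add: assoc_mult_mat[of _ n n _ n _ n])
qed

lemma swap_cols_rows_index_transpose:
  assumes "A \<in> carrier_mat n n" "i < n" "j < n" "k < n" "l < n"
  shows "swap_cols_rows k l A $$ (i, j) = A $$ (Transposition.transpose k l i, Transposition.transpose k l j)"
  using assms by (simp add: transpose_def)

lemma swaprows_mat_normalizer_closed:
  fixes R :: "(nat \<times> nat) set"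
  assumes norm: "(swaprows_mat N k l :: 'a::field mat) \<in> normalizer N (UT N R)"
    and irr: "irrefl R" and kl: "k < N" "l < N" and ij: "i < N" "j < N" and R: "(i + 1, j + 1) \<in> R"
  shows "(Transposition.transpose k l i + 1, Transposition.transpose k l j + 1) \<in> R"
proof -
  let ?P = "swaprows_mat N k l :: 'a mat" and ?\<sigma> = "Transposition.transpose k l"
  let ?E = "addrow_mat N (1 :: 'a) i j"
  have "i \<noteq> j" using R irr by (auto simp: irrefl_def)
  have \<sigma>: "?\<sigma> i < N" "?\<sigma> j < N" "?\<sigma> i \<noteq> ?\<sigma> j"
    using ij kl \<open>i \<noteq> j\<close> by (auto simp: transpose_def)
  have "\<forall>h \<in> carrier_mat N N. ?P * h = 1\<^sub>m N \<and> h * ?P = 1\<^sub>m N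
      \<longrightarrow> {?P * u * h | u. u \<in> UT N R} = UT N R"
    using norm by (simp add: normalizer_def)
  then have conj: "{?P * u * ?P | u. u \<in> UT N R} = UT N R"
    using swaprows_mat_carrier swaprows_mat_inv[OF kl] by blast
  have "?E \<in> UT N R" using R \<open>i \<noteq> j\<close> by (auto simp: mem_UT_iff[OF irr])
  then have "?P * ?E * ?P \<in> UT N R" using conj by blast
  then have "swap_cols_rows k l ?E \<in> UT N R" by (simp add: swaprows_mat_conj[OF addrow_mat_carrier kl])
  then have supp: "\<forall>r<N. \<forall>s<N. r \<noteq> s \<longrightarrow> swap_cols_rows k l ?E $$ (r, s) \<noteq> 0 \<longrightarrow> (r + 1, s + 1) \<in> R"
    using mem_UT_iff[OF irr, of "swap_cols_rows k l ?E" N] by blast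
  have "swap_cols_rows k l ?E $$ (?\<sigma> i, ?\<sigma> j) = ?E $$ (i, j)"
    by (subst swap_cols_rows_index_transpose) (use ij kl \<sigma> in simp_all)
  also have "\<dots> = 1" using ij \<open>i \<noteq> j\<close> by simp
  finally show ?thesis using supp[rule_format, OF \<sigma>] by simp
qed

lemma Levi_subset_ut_block_diag: "Levi \<beta> \<subseteq> ut (sum_list \<beta>) (block_diag \<beta>)"
  by (auto simp: Levi_def GL_def ut_def block_diag_def)

lemma Levi_normalizes_UT_fat:
  "(Levi \<beta> :: 'a::{finite,field} mat set) \<subseteq> normalizer (sum_list \<beta>) (UT (sum_list \<beta>) (fat \<beta> P))"
proof
  fix g :: "'a mat" assume gL: "g \<in> Levi \<beta>"
  let ?N = "sum_list \<beta>"
  have g: "g \<in> ut ?N (block_diag \<beta>)" using gL Levi_subset_ut_block_diag by blast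
  have "{g * u * h | u. u \<in> UT ?N (fat \<beta> P)} = UT ?N (fat \<beta> P)"
    if h: "h \<in> carrier_mat ?N ?N" "g * h = 1\<^sub>m ?N" "h * g = 1\<^sub>m ?N" for h
  proof -
    have "h \<in> ut ?N (block_diag \<beta>)"
      by (rule left_inverse_in_ut[OF Id_on_subset_block_diag block_diag_trans g h(1,3)])
    then show ?thesis by (rule conj_UT_eq[OF g _ h(2,3) block_diag_O_fat fat_O_block_diag])
  qed
  moreover have "g \<in> GL ?N" using gL by (simp add: Levi_def)
  ultimately show "g \<in> normalizer ?N (UT ?N (fat \<beta> P))" by (simp add: normalizer_def)
qed

lemma levi_compatible_fat:
  assumes "subposet {1..length \<beta>} P (chain_order (length \<beta>))"
  shows "levi_compatible TYPE('a::{finite,field}) \<beta> (fat \<beta> P)"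
proof -
  have P: "P \<subseteq> chain_order (length \<beta>)" "irrefl P" "trans P"
    using assms by (auto simp: subposet_def strict_po_def)
  have "fat \<beta> P \<subseteq> {1..sum_list \<beta>} \<times> {1..sum_list \<beta>}"
    using blk_subset by (fastforce simp: fat_def)
  moreover have "irrefl (fat \<beta> P)"
    using P(2) blk_disjoint unfolding irrefl_def fat_def by blast
  moreover have "trans (fat \<beta> P)"
    using P(3) blk_disjoint unfolding trans_def fat_def by blast
  moreover have "fat \<beta> P \<subseteq> Qpos \<beta>"
    using P(1) by (force simp: fat_def Qpos_def chain_order_def)
  ultimately show ?thesis
    using Levi_normalizes_UT_fat[of \<beta> P] by (auto simp: levi_compatible_def subposet_def strict_po_def)
qed

lemma swaprows_mat_in_Levi:
  assumes c: "c \<in> blk \<beta> k" "c' \<in> blk \<beta> k"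
  shows "(swaprows_mat (sum_list \<beta>) (c - 1) (c' - 1) :: 'a::field mat) \<in> Levi \<beta>"
proof -
  let ?N = "sum_list \<beta>" and ?P = "swaprows_mat (sum_list \<beta>) (c - 1) (c' - 1) :: 'a mat"
  have c1: "1 \<le> c" "c \<le> ?N" "1 \<le> c'" "c' \<le> ?N" using c blk_subset[of \<beta> k] by auto
  have "?P * ?P = 1\<^sub>m ?N" by (rule swaprows_mat_inv) (use c1 in auto)
  then have "inverts_mat ?P ?P" by (simp add: inverts_mat_def)
  moreover have "square_mat ?P" by simp
  ultimately have GL: "?P \<in> GL ?N"
    unfolding GL_def invertible_mat_def using swaprows_mat_carrier by blast
  have block: "\<exists>k. 1 \<le> k \<and> k \<le> length \<beta> \<and> i + 1 \<in> blk \<beta> k \<and> j + 1 \<in> blk \<beta> k"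
    if ij: "i < ?N" "j < ?N" "?P $$ (i, j) \<noteq> 0" for i j
  proof -
    have "i = j \<or> (i = c - 1 \<and> j = c' - 1) \<or> (i = c' - 1 \<and> j = c - 1)"
      using ij by (auto split: if_splits)
    then consider "i = j" | "i + 1 = c \<and> j + 1 = c'" | "i + 1 = c' \<and> j + 1 = c"
      using c1 by linarith
    then show ?thesis
    proof cases
      case 1
      obtain k' where "i + 1 \<in> blk \<beta> k'" using blk_cover[of "i + 1" \<beta>] ij(1) by auto
      then show ?thesis using 1 blk_index_bounds[of "i + 1" \<beta> k'] by auto
    next
      case 2
      then show ?thesis using c blk_index_bounds[OF c(1)] by auto
    next
      case 3
      then show ?thesis using c blk_index_bounds[OF c(1)] by auto
    qed
  qed
  show ?thesis unfolding Levi_def using GL block by blast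
qed

lemma levi_compatible_transpose_closed:
  assumes lc: "levi_compatible TYPE('a::field) \<beta> R"
    and ab: "(a, b) \<in> R" and c: "c \<in> blk \<beta> k" "c' \<in> blk \<beta> k"
  shows "(Transposition.transpose c c' a, Transposition.transpose c c' b) \<in> R"
proof -
  let ?N = "sum_list \<beta>"
  have R: "R \<subseteq> {1..?N} \<times> {1..?N}" "irrefl R"
    using lc by (auto simp: levi_compatible_def subposet_def strict_po_def)
  have c1: "1 \<le> c" "c \<le> ?N" "1 \<le> c'" "c' \<le> ?N" using c blk_subset[of \<beta> k] by auto
  have ab1: "1 \<le> a" "a \<le> ?N" "1 \<le> b" "b \<le> ?N" using ab R(1) by auto
  have "(swaprows_mat ?N (c - 1) (c' - 1) :: 'a mat) \<in> normalizer ?N (UT ?N R)"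
    using lc swaprows_mat_in_Levi[OF c] by (auto simp: levi_compatible_def)
  from swaprows_mat_normalizer_closed[OF this R(2), of "a - 1" "b - 1"]
  have "(Transposition.transpose (c - 1) (c' - 1) (a - 1) + 1,
         Transposition.transpose (c - 1) (c' - 1) (b - 1) + 1) \<in> R"
    using c1 ab1 ab by simp
  moreover have "Transposition.transpose (c - 1) (c' - 1) (x - 1) + 1 = Transposition.transpose c c' x"
    if "1 \<le> x" for x
    using that c1 by (auto simp: transpose_def)
  ultimately show ?thesis using ab1 by simp
qed

lemma levi_compatible_block_closed:
  assumes lc: "levi_compatible TYPE('a::field) \<beta> R" and ab: "(a, b) \<in> R"
    and a: "a \<in> blk \<beta> i" "a' \<in> blk \<beta> i" and b: "b \<in> blk \<beta> j" "b' \<in> blk \<beta> j"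
  shows "(a', b') \<in> R"
proof -
  have "R \<subseteq> Qpos \<beta>" using lc by (auto simp: levi_compatible_def subposet_def)
  then obtain i' j' where "i' < j'" "a \<in> blk \<beta> i'" "b \<in> blk \<beta> j'" using ab by (auto simp: Qpos_def)
  then have "i \<noteq> j" using blk_disjoint a(1) b(1) by blast
  then have "b \<noteq> a" "b \<noteq> a'" "a' \<noteq> b" "a' \<noteq> b'" using blk_disjoint a b by metis+
  have "(Transposition.transpose a a' a, Transposition.transpose a a' b) \<in> R"
    by (rule levi_compatible_transpose_closed[OF lc ab a])
  then have "(a', b) \<in> R" using \<open>b \<noteq> a\<close> \<open>b \<noteq> a'\<close> by simp
  then have "(Transposition.transpose b b' a', Transposition.transpose b b' b) \<in> R"
    by (rule levi_compatible_transpose_closed[OF lc _ b])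
  then show ?thesis using \<open>a' \<noteq> b\<close> \<open>a' \<noteq> b'\<close> by simp
qed

definition block_relation :: "nat list \<Rightarrow> (nat \<times> nat) set \<Rightarrow> (nat \<times> nat) set" where
  "block_relation \<beta> R = {(i, j). \<exists>a b. (a, b) \<in> R \<and> a \<in> blk \<beta> i \<and> b \<in> blk \<beta> j}"

lemma fat_block_relation:
  assumes lc: "levi_compatible TYPE('a::field) \<beta> R"
  shows "fat \<beta> (block_relation \<beta> R) = R"
proof
  show "fat \<beta> (block_relation \<beta> R) \<subseteq> R"
    unfolding fat_def block_relation_def using levi_compatible_block_closed[OF lc] by blast
  have "R \<subseteq> Qpos \<beta>" using lc by (auto simp: levi_compatible_def subposet_def)
  then show "R \<subseteq> fat \<beta> (block_relation \<beta> R)"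
    unfolding fat_def block_relation_def Qpos_def by blast
qed

lemma block_relation_subposet:
  assumes lc: "levi_compatible TYPE('a::field) \<beta> R"
  shows "subposet {1..length \<beta>} (block_relation \<beta> R) (chain_order (length \<beta>))"
proof -
  have R: "R \<subseteq> Qpos \<beta>" "trans R" using lc by (auto simp: levi_compatible_def subposet_def strict_po_def)
  have sub: "block_relation \<beta> R \<subseteq> chain_order (length \<beta>)"
  proof (intro subrelI)
    fix i j assume "(i, j) \<in> block_relation \<beta> R"
    then obtain a b where ab: "(a, b) \<in> R" "a \<in> blk \<beta> i" "b \<in> blk \<beta> j" by (auto simp: block_relation_def)
    then obtain i' j' where "1 \<le> i'" "i' < j'" "j' \<le> length \<beta>" "a \<in> blk \<beta> i'" "b \<in> blk \<beta> j'"
      using R(1) by (auto simp: Qpos_def)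
    moreover have "i' = i" "j' = j" using calculation ab blk_disjoint by blast+
    ultimately show "(i, j) \<in> chain_order (length \<beta>)" by (simp add: chain_order_def)
  qed
  have "trans (block_relation \<beta> R)"
  proof (rule transI)
    fix i j k assume "(i, j) \<in> block_relation \<beta> R" "(j, k) \<in> block_relation \<beta> R"
    then obtain a b b' c where w: "(a, b) \<in> R" "(b', c) \<in> R"
      "a \<in> blk \<beta> i" "b \<in> blk \<beta> j" "b' \<in> blk \<beta> j" "c \<in> blk \<beta> k"
      by (auto simp: block_relation_def)
    have "(a, b') \<in> R" by (rule levi_compatible_block_closed[OF lc w(1) w(3) w(3) w(4) w(5)])
    with w(2) R(2) have "(a, c) \<in> R" by (meson transD)
    then show "(i, k) \<in> block_relation \<beta> R" using w(3,6) by (auto simp: block_relation_def)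
  qed
  with sub show ?thesis by (auto simp: subposet_def strict_po_def chain_order_def irrefl_def)
qed

theorem mainTheorem3:
  fixes \<beta> :: "nat list" and N :: nat
  assumes "composition \<beta> N"
  shows "bij_betw (fat \<beta>)
           {P. subposet {1..length \<beta>} P (chain_order (length \<beta>))}
           {R. levi_compatible TYPE('a::{finite,field}) \<beta> R}"
proof (rule bij_betw_imageI)
  have pos: "\<forall>b \<in> set \<beta>. 0 < b" using assms by (simp add: composition_def)
  show "inj_on (fat \<beta>) {P. subposet {1..length \<beta>} P (chain_order (length \<beta>))}"
  proof (rule inj_onI)
    fix P Q assume "P \<in> {P. subposet {1..length \<beta>} P (chain_order (length \<beta>))}"
      and "Q \<in> {P. subposet {1..length \<beta>} P (chain_order (length \<beta>))}" and "fat \<beta> P = fat \<beta> Q"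
    then show "P = Q"
      using fat_subsetD[OF pos, of P Q] fat_subsetD[OF pos, of Q P]
      by (auto simp: subposet_def strict_po_def)
  qed
  show "fat \<beta> ` {P. subposet {1..length \<beta>} P (chain_order (length \<beta>))}
          = {R. levi_compatible TYPE('a) \<beta> R}"
    using levi_compatible_fat fat_block_relation block_relation_subposet by blast
qed

end
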